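(* The linear subspace $\mathsf{CDUC}_d$ of linear maps on $\mathcal{M}_d(\mathbb{C})$ is stable under composition, but $\mathsf{DUC}_d$ is not. Moreover, for pairs $(A_1,B_1),(A_2,B_2)$ of $d\times d$ complex matrices with $\operatorname{diag}(A_k)=\operatorname{diag}(B_k)$, and for $i,j\in\{1,2\}$: if $i=j$ then $\Phi^{(i)}_{(A_1,B_1)}\circ\Phi^{(j)}_{(A_2,B_2)}=\Phi^{(2)}_{(\mathfrak A,\mathfrak B)}$, and if $i\ne j$ then $\Phi^{(i)}_{(A_1,B_1)}\circ\Phi^{(j)}_{(A_2,B_2)}=\Phi^{(1)}_{(\mathfrak A,\mathfrak B)}$, where in both cases $(\mathfrak A,\mathfrak B)=(A_1,B_1)\circ_i(A_2,B_2)$.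
   Context: $\mathcal{DU}_d$ is the group of diagonal unitary $d\times d$ matrices. A linear map $\Phi$ on $\mathcal{M}_d(\mathbb{C})$ is DUC if $\Phi(UXU^* )=U^*\Phi(X)U$ for all $X$ and $U\in\mathcal{DU}_d$, and CDUC if $\Phi(UXU^* )=U\Phi(X)U^*$; $\mathsf{DUC}_d$, $\mathsf{CDUC}_d$ are the sets of such maps. A set $K$ of maps is stable under composition if $\Phi_1\circ\Phi_2\in K$ for all $\Phi_1,\Phi_2\in K$. Notation: $\odot$ is entrywise product; $\operatorname{diag}B$ is the diagonal matrix with the diagonal of $B$, $\widetilde B=B-\operatorname{diag}B$, $|\operatorname{diag}X\rangle$ is the vector of diagonal entries of $X$ and $\operatorname{diag}(v)$ the diagonal matrix with diagonal $v$. For a pair $(A,B)$ with equal diagonals, $\Phi^{(1)}_{(A,B)}(X)=\operatorname{diag}(A|\operatorname{diag}X\rangle)+\widetilde B\odot X^\top$ and $\Phi^{(2)}_{(A,B)}(X)=\operatorname{diag}(A|\operatorname{diag}X\rangle)+\widetilde B\odot X$. The compositions are $(A_1,B_1)\circ_1(A_2,B_2)=(A_1A_2,\ B_1\odot B_2^\top+\operatorname{diag}(A_1A_2-B_1\odot B_2))$ and $(A_1,B_1)\circ_2(A_2,B_2)=(A_1A_2,\ B_1\odot B_2+\operatorname{diag}(A_1A_2-B_1\odot B_2))$. *)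

theory Defs
  imports "HOL-Analysis.Analysis"
begin

text \<open>d x d complex matrices are modelled as complex^'n^'n, with d = CARD('n).\<close>


definition mat_smult :: "complex \<Rightarrow> (complex^'n::finite^'n) \<Rightarrow> (complex^'n::finite^'n)" where
  "mat_smult c X = (\<chi> i j. c * X$i$j)"

definition mat_linear :: "((complex^'n::finite^'n) \<Rightarrow> (complex^'n::finite^'n)) \<Rightarrow> bool" where
  "mat_linear \<Phi> \<longleftrightarrow> (\<forall>X Y. \<Phi> (X + Y) = \<Phi> X + \<Phi> Y) \<and>
                     (\<forall>c X. \<Phi> (mat_smult c X) = mat_smult c (\<Phi> X))"

definition mat_adj :: "(complex^'n::finite^'n) \<Rightarrow> (complex^'n::finite^'n)" where
  "mat_adj U = (\<chi> i j. cnj (U$j$i))"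

definition diag_unitary :: "(complex^'n::finite^'n) \<Rightarrow> bool" where
  "diag_unitary U \<longleftrightarrow> (\<forall>i j. i \<noteq> j \<longrightarrow> U$i$j = 0) \<and> (\<forall>i. cmod (U$i$i) = 1)"

definition DUC :: "((complex^'n::finite^'n) \<Rightarrow> (complex^'n::finite^'n)) set" where
  "DUC = {\<Phi>. mat_linear \<Phi> \<and>
     (\<forall>U X. diag_unitary U \<longrightarrow> \<Phi> (U ** X ** mat_adj U) = mat_adj U ** \<Phi> X ** U)}"

definition CDUC :: "((complex^'n::finite^'n) \<Rightarrow> (complex^'n::finite^'n)) set" where
  "CDUC = {\<Phi>. mat_linear \<Phi> \<and>
     (\<forall>U X. diag_unitary U \<longrightarrow> \<Phi> (U ** X ** mat_adj U) = U ** \<Phi> X ** mat_adj U)}"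

definition comp_stable :: "('a \<Rightarrow> 'a) set \<Rightarrow> bool" where
  "comp_stable K \<longleftrightarrow> (\<forall>\<Phi>1\<in>K. \<forall>\<Phi>2\<in>K. \<Phi>1 \<circ> \<Phi>2 \<in> K)"

definition hadamard :: "(complex^'n::finite^'n) \<Rightarrow> (complex^'n::finite^'n) \<Rightarrow> (complex^'n::finite^'n)" (infixl "\<odot>" 70) where
  "A \<odot> B = (\<chi> i j. A$i$j * B$i$j)"

definition diag_part :: "(complex^'n::finite^'n) \<Rightarrow> (complex^'n::finite^'n)" where
  "diag_part B = (\<chi> i j. if i = j then B$i$j else 0)"

definition offdiag :: "(complex^'n::finite^'n) \<Rightarrow> (complex^'n::finite^'n)" where
  "offdiag B = B - diag_part B"

definition diag_vec :: "(complex^'n::finite^'n) \<Rightarrow> complex^'n" where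
  "diag_vec X = (\<chi> i. X$i$i)"

definition diag_of :: "complex^'n \<Rightarrow> (complex^'n::finite^'n)" where
  "diag_of v = (\<chi> i j. if i = j then v$i else 0)"

definition Phi1 :: "(complex^'n::finite^'n) \<Rightarrow> (complex^'n::finite^'n) \<Rightarrow> (complex^'n::finite^'n) \<Rightarrow> (complex^'n::finite^'n)" where
  "Phi1 A B X = diag_of (A *v diag_vec X) + offdiag B \<odot> transpose X"

definition Phi2 :: "(complex^'n::finite^'n) \<Rightarrow> (complex^'n::finite^'n) \<Rightarrow> (complex^'n::finite^'n) \<Rightarrow> (complex^'n::finite^'n)" where
  "Phi2 A B X = diag_of (A *v diag_vec X) + offdiag B \<odot> X"

definition Phi :: "nat \<Rightarrow> (complex^'n::finite^'n) \<times> (complex^'n::finite^'n) \<Rightarrow> (complex^'n::finite^'n) \<Rightarrow> (complex^'n::finite^'n)" where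
  "Phi i AB = (if i = 1 then Phi1 (fst AB) (snd AB) else Phi2 (fst AB) (snd AB))"

definition comp1 :: "(complex^'n::finite^'n) \<times> (complex^'n::finite^'n) \<Rightarrow> (complex^'n::finite^'n) \<times> (complex^'n::finite^'n) \<Rightarrow> (complex^'n::finite^'n) \<times> (complex^'n::finite^'n)" where
  "comp1 AB1 AB2 = (let (A1, B1) = AB1; (A2, B2) = AB2 in
     (A1 ** A2, B1 \<odot> transpose B2 + diag_part (A1 ** A2 - B1 \<odot> B2)))"

definition comp2 :: "(complex^'n::finite^'n) \<times> (complex^'n::finite^'n) \<Rightarrow> (complex^'n::finite^'n) \<times> (complex^'n::finite^'n) \<Rightarrow> (complex^'n::finite^'n) \<times> (complex^'n::finite^'n)" where
  "comp2 AB1 AB2 = (let (A1, B1) = AB1; (A2, B2) = AB2 in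
     (A1 ** A2, B1 \<odot> B2 + diag_part (A1 ** A2 - B1 \<odot> B2)))"

definition comp_idx :: "nat \<Rightarrow> (complex^'n::finite^'n) \<times> (complex^'n::finite^'n) \<Rightarrow> (complex^'n::finite^'n) \<times> (complex^'n::finite^'n) \<Rightarrow> (complex^'n::finite^'n) \<times> (complex^'n::finite^'n)" where
  "comp_idx i = (if i = 1 then comp1 else comp2)"

end

theory Submission
  imports Defs
begin

text \<open>Off the diagonal, \<open>\<Phi>\<^sup>(\<^sup>1\<^sup>)\<close> weights the transposed entry \<open>X b a\<close> by \<open>B a b\<close> and
  \<open>\<Phi>\<^sup>(\<^sup>2\<^sup>)\<close> weights \<open>X a b\<close> itself, while on the diagonal both act by \<open>A\<close>. Composing two
  such maps multiplies the diagonal actions and the off-diagonal weights, and the number of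
  transpositions involved decides the type of the result. Only the off-diagonal part of \<open>B\<close>
  matters.

  The covariance condition of \<open>CDUC\<close> is clearly preserved by composition, whereas a composite
  of two \<open>DUC\<close> maps satisfies the \<open>CDUC\<close> condition instead. The transpose is in \<open>DUC\<close>, but its
  square, the identity, is not once \<open>d \<ge> 2\<close>: \<open>U = diag(i,1,\<dots>,1)\<close> turns the matrix unit
  \<open>E\<^sub>1\<^sub>2\<close> into \<open>i E\<^sub>1\<^sub>2\<close> under \<open>X \<mapsto> U X U\<^sup>*\<close> and into \<open>-i E\<^sub>1\<^sub>2\<close> under \<open>X \<mapsto> U\<^sup>* X U\<close>.\<close>

lemma Phi1_nth:
  "Phi1 A B X $ a $ b = (if a = b then (A *v diag_vec X) $ a else B $ a $ b * X $ b $ a)"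
  by (simp add: Phi1_def diag_of_def offdiag_def diag_part_def hadamard_def transpose_def)

lemma Phi2_nth:
  "Phi2 A B X $ a $ b = (if a = b then (A *v diag_vec X) $ a else B $ a $ b * X $ a $ b)"
  by (simp add: Phi2_def diag_of_def offdiag_def diag_part_def hadamard_def)

lemma diag_vec_Phi1: "diag_vec (Phi1 A B X) = A *v diag_vec X"
  by (simp add: vec_eq_iff diag_vec_def Phi1_nth)

lemma diag_vec_Phi2: "diag_vec (Phi2 A B X) = A *v diag_vec X"
  by (simp add: vec_eq_iff diag_vec_def Phi2_nth)

lemmas Phi_entry_simps = Phi1_nth Phi2_nth diag_vec_Phi1 diag_vec_Phi2
  matrix_vector_mul_assoc hadamard_def transpose_def

lemma Phi1_comp_Phi1: "Phi1 A1 B1 \<circ> Phi1 A2 B2 = Phi2 (A1 ** A2) (B1 \<odot> transpose B2)"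
  by (simp add: fun_eq_iff vec_eq_iff Phi_entry_simps)

lemma Phi1_comp_Phi2: "Phi1 A1 B1 \<circ> Phi2 A2 B2 = Phi1 (A1 ** A2) (B1 \<odot> transpose B2)"
  by (simp add: fun_eq_iff vec_eq_iff Phi_entry_simps)

lemma Phi2_comp_Phi1: "Phi2 A1 B1 \<circ> Phi1 A2 B2 = Phi1 (A1 ** A2) (B1 \<odot> B2)"
  by (simp add: fun_eq_iff vec_eq_iff Phi_entry_simps)

lemma Phi2_comp_Phi2: "Phi2 A1 B1 \<circ> Phi2 A2 B2 = Phi2 (A1 ** A2) (B1 \<odot> B2)"
  by (simp add: fun_eq_iff vec_eq_iff Phi_entry_simps)

lemma offdiag_add_diag_part: "offdiag (M + diag_part N) = offdiag M"
  by (simp add: vec_eq_iff offdiag_def diag_part_def)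

lemma Phi1_add_diag_part: "Phi1 A (B + diag_part N) = Phi1 A B"
  by (simp add: fun_eq_iff Phi1_def offdiag_add_diag_part)

lemma Phi2_add_diag_part: "Phi2 A (B + diag_part N) = Phi2 A B"
  by (simp add: fun_eq_iff Phi2_def offdiag_add_diag_part)

lemma Phi_comp_Phi:
  assumes "i \<in> {1, 2}" and "j \<in> {1, 2}"
  shows "Phi i (A1, B1) \<circ> Phi j (A2, B2) =
    Phi (if i = j then 2 else 1) (comp_idx i (A1, B1) (A2, B2))"
  using assms
  by (auto simp: Phi_def comp_idx_def comp1_def comp2_def Phi1_add_diag_part Phi2_add_diag_part
      Phi1_comp_Phi1 Phi1_comp_Phi2 Phi2_comp_Phi1 Phi2_comp_Phi2)

lemma comp_stable_CDUC: "comp_stable (CDUC :: ((complex^'n::finite^'n) \<Rightarrow> _) set)"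
  unfolding comp_stable_def CDUC_def mat_linear_def by auto

lemma matrix_mul_diagonal_left_nth:
  assumes "\<forall>i j. i \<noteq> j \<longrightarrow> D $ i $ j = 0"
  shows "(D ** X) $ a $ b = D $ a $ a * X $ a $ b"
  using assms unfolding matrix_matrix_mult_def by (simp, subst sum.remove[of _ a], auto)

lemma matrix_mul_diagonal_right_nth:
  assumes "\<forall>i j. i \<noteq> j \<longrightarrow> D $ i $ j = 0"
  shows "(X ** D) $ a $ b = X $ a $ b * D $ b $ b"
  using assms unfolding matrix_matrix_mult_def by (simp, subst sum.remove[of _ b], auto)

lemma diag_unitary_conj_nth:
  assumes "diag_unitary U"
  shows "(U ** X ** mat_adj U) $ a $ b = U $ a $ a * X $ a $ b * cnj (U $ b $ b)"
    and "(mat_adj U ** X ** U) $ a $ b = cnj (U $ a $ a) * X $ a $ b * U $ b $ b"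
  using assms unfolding diag_unitary_def
  by (subst matrix_mul_diagonal_right_nth, auto simp: mat_adj_def matrix_mul_diagonal_left_nth)+

lemma transpose_in_DUC: "(transpose :: complex^'n::finite^'n \<Rightarrow> _) \<in> DUC"
  unfolding DUC_def mat_linear_def
  by (simp add: vec_eq_iff transpose_def mat_smult_def diag_unitary_conj_nth)

lemma id_notin_DUC:
  assumes "CARD('n::finite) \<ge> 2"
  shows "(id :: complex^'n^'n \<Rightarrow> _) \<notin> DUC"
proof
  assume id_DUC: "(id :: complex^'n^'n \<Rightarrow> _) \<in> DUC"
  obtain a b :: 'n where "a \<noteq> b"
    using assms card_le_Suc0_iff_eq[of "UNIV :: 'n set"] by fastforce
  define U :: "complex^'n^'n" where "U = (\<chi> p q. if p = q then (if p = a then \<i> else 1) else 0)"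
  define X :: "complex^'n^'n" where "X = (\<chi> p q. if p = a \<and> q = b then 1 else 0)"
  have "diag_unitary U"
    unfolding diag_unitary_def U_def by simp
  moreover from this have "U ** X ** mat_adj U = mat_adj U ** X ** U"
    using id_DUC unfolding DUC_def by simp
  ultimately have "U $ a $ a * X $ a $ b * cnj (U $ b $ b) = cnj (U $ a $ a) * X $ a $ b * U $ b $ b"
    by (metis diag_unitary_conj_nth)
  with \<open>a \<noteq> b\<close> show False
    by (simp add: U_def X_def)
qed

lemma not_comp_stable_DUC:
  assumes "CARD('n::finite) \<ge> 2"
  shows "\<not> comp_stable (DUC :: (complex^'n^'n \<Rightarrow> _) set)"
proof
  assume "comp_stable (DUC :: (complex^'n^'n \<Rightarrow> _) set)"
  then have "transpose \<circ> transpose \<in> (DUC :: (complex^'n^'n \<Rightarrow> _) set)"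
    using transpose_in_DUC unfolding comp_stable_def by blast
  then show False
    using id_notin_DUC[OF assms] by (simp add: comp_def id_def)
qed

theorem proposition4p4:
  fixes A1 B1 A2 B2 :: "complex^'n^'n" and i j :: nat
  assumes "diag_part A1 = diag_part B1" and "diag_part A2 = diag_part B2"
    and "i \<in> {1, 2}" and "j \<in> {1, 2}"
  shows "comp_stable (CDUC :: ((complex^'n^'n) \<Rightarrow> (complex^'n^'n)) set)
    \<and> (CARD('n) \<ge> 2 \<longrightarrow> \<not> comp_stable (DUC :: ((complex^'n^'n) \<Rightarrow> (complex^'n^'n)) set))
    \<and> (i = j \<longrightarrow> Phi i (A1, B1) \<circ> Phi j (A2, B2) = Phi 2 (comp_idx i (A1, B1) (A2, B2)))
    \<and> (i \<noteq> j \<longrightarrow> Phi i (A1, B1) \<circ> Phi j (A2, B2) = Phi 1 (comp_idx i (A1, B1) (A2, B2)))"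
  using comp_stable_CDUC[where 'n = 'n] not_comp_stable_DUC[where 'n = 'n]
    Phi_comp_Phi[OF assms(3,4), of A1 B1 A2 B2] by auto

end
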